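(* Define integers $\lambda_r$ for $r\ge 1$ by $\lambda_1=1$ and $\lambda_r = 2\left(3^{\lceil r/2 \rceil}+1\right)\lambda_{\lceil r/2 \rceil}$ for $r \ge 2$. Then for every integer $r \ge 1$, $g(3^r,3) \le \lambda_r$.
   Context: For integers $2\le k\le n$, let $S_n$ denote the set of permutations of $[n]=\{1,\dots,n\}$ (written as sequences), and $S_{n,k}$ the set of all sequences of $k$ distinct elements of $[n]$. A sequence $\kappa\in S_{n,k}$ is a subsequence of a permutation $\pi\in S_n$ if its elements appear in $\pi$ in the same relative order as in $\kappa$. A perfect sequence covering array ${\rm PSCA}(n,k)$ with multiplicity $\lambda$ (a positive integer) is a multiset $X$ of elements of $S_n$ such that every $\kappa\in S_{n,k}$ is a subsequence of exactly $\lambda$ elements of $X$ (counted with multiplicity); such an $X$ has size $\lambda k!$. $g(n,k)$ denotes the smallest $\lambda$ for which a ${\rm PSCA}(n,k)$ with multiplicity $\lambda$ exists. *)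

theory Defs
  imports Main "HOL-Library.Multiset" "HOL-Library.Sublist"
begin

definition perms :: "nat \<Rightarrow> nat list set" where
  "perms n = {\<pi>. distinct \<pi> \<and> set \<pi> = {1..n}}"

definition kseqs :: "nat \<Rightarrow> nat \<Rightarrow> nat list set" where
  "kseqs n k = {\<kappa>. distinct \<kappa> \<and> length \<kappa> = k \<and> set \<kappa> \<subseteq> {1..n}}"

definition is_PSCA :: "nat \<Rightarrow> nat \<Rightarrow> nat \<Rightarrow> nat list multiset \<Rightarrow> bool" where
  "is_PSCA n k lam X \<longleftrightarrow>
     (\<forall>\<pi>\<in>#X. \<pi> \<in> perms n) \<and>
     (\<forall>\<kappa>\<in>kseqs n k. size (filter_mset (\<lambda>\<pi>. subseq \<kappa> \<pi>) X) = lam)"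

definition g :: "nat \<Rightarrow> nat \<Rightarrow> nat" where
  "g n k = (LEAST lam. lam > 0 \<and> (\<exists>X. is_PSCA n k lam X))"

text \<open>lambda_1 = 1, lambda_r = 2 (3^{ceil(r/2)} + 1) lambda_{ceil(r/2)} for r >= 2;
  ceil(r/2) = (r+1) div 2. Value at 0 is irrelevant.\<close>
function lam_seq :: "nat \<Rightarrow> nat" where
  "lam_seq r = (if r \<le> 1 then 1
                else 2 * (3 ^ ((r + 1) div 2) + 1) * lam_seq ((r + 1) div 2))"
  by pat_completeness auto
termination by (relation "measure id") auto

end

theory Submission
  imports Defs "Berlekamp_Zassenhaus.Distinct_Degree_Factorization" "HOL-Computational_Algebra.Squarefree"
    "HOL-Library.Product_Lexorder"
begin

text \<open>
  Given a PSCA(q,3) X of multiplicity \<lambda> and an affine plane of order q whose q^2 points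
  include [n], each parallel class d and each \<sigma> \<in> X yield two permutations of [n]: order the
  points by the rank in \<sigma> of their line in class d, breaking ties by the rank in \<sigma>, respectively
  in reversed \<sigma>, of their place on that line. A triple x y z is covered 2\<lambda> times by the two
  permutations of a class in which the three points lie on three distinct lines or on one line,
  3\<lambda> times if only x, y or only y, z share a line, and never if only x, z do. Every pair of
  points shares a line in exactly one of the q + 1 classes, so each triple is covered
  2(q + 1)\<lambda> times. With q = 3^s, s = \<lceil>r/2\<rceil>, where the plane comes from the field of order
  3^s, this is the recursion for \<lambda>_r; the base case is the set of all permutations of [3].
\<close>

section \<open>Finite fields of order 3^s\<close>

lemma degree_X_power_minus_X:
  assumes "n \<ge> 2"
  shows "degree (monom (1::'a::idom) 1 ^ n - monom 1 1) = n"
  using assms unfolding x_pow_n diff_conv_add_uminus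
  by (subst degree_add_eq_left) (simp_all add: degree_monom_eq)

lemma pderiv_X_power_card_minus_X:
  assumes "s \<ge> 1"
  shows "pderiv (monom (1::'a::prime_card mod_ring) 1 ^ CARD('a) ^ s - monom 1 1) = -1"
proof -
  have "(of_nat (CARD('a) ^ s) :: 'a mod_ring) = 0"
    using assms by (simp add: of_nat_card_eq_0)
  thus ?thesis unfolding x_pow_n by (simp add: pderiv_diff pderiv_monom)
qed

lemma squarefree_if_is_unit_pderiv:
  fixes P :: "'a::idom poly"
  assumes "pderiv P dvd 1"
  shows "squarefree P"
proof (rule squarefreeI)
  fix q assume "q ^ 2 dvd P"
  then obtain h where "P = q * q * h" by (auto simp: power2_eq_square dvd_def)
  hence "pderiv P = q * (2 * pderiv q * h + q * pderiv h)"
    by (simp add: pderiv_mult algebra_simps)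
  hence "q dvd pderiv P" by simp
  thus "q dvd 1" using assms by (rule dvd_trans)
qed

lemma squarefree_dvd_if_prime_divisors_dvd:
  fixes a b :: "'a::factorial_semiring"
  assumes "squarefree a" "b \<noteq> 0" and "\<And>p. prime p \<Longrightarrow> p dvd a \<Longrightarrow> p dvd b"
  shows "a dvd b"
proof -
  have "a \<noteq> 0" using assms(1) by auto
  have "prime_factorization a \<subseteq># prime_factorization b"
  proof (rule mset_subset_eqI)
    fix p
    show "count (prime_factorization a) p \<le> count (prime_factorization b) p"
    proof (cases "prime p \<and> p dvd a")
      case True
      hence "multiplicity p a \<le> 1"
        using assms(1) squarefree_factorial_semiring''[OF \<open>a \<noteq> 0\<close>] by blast
      moreover have "multiplicity p b \<ge> 1"
        using True assms(2,3) prime_elem_multiplicity_eq_zero_iff[of p b] by (auto simp: Suc_le_eq)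
      ultimately show ?thesis using True by (simp add: count_prime_factorization_prime)
    next
      case False
      thus ?thesis using \<open>a \<noteq> 0\<close>
        by (auto simp: count_prime_factorization not_dvd_imp_multiplicity_0)
    qed
  qed
  thus ?thesis by (rule prime_factorization_subset_imp_dvd[OF \<open>a \<noteq> 0\<close>])
qed

lemma sum_powers_less_power:
  assumes "(c::nat) \<ge> 2"
  shows "(\<Sum>d<s. c ^ d) < c ^ s"
proof (induction s)
  case (Suc s)
  have "(\<Sum>d<Suc s. c ^ d) < c ^ s + c ^ s" using Suc by simp
  also have "\<dots> = 2 * c ^ s" by simp
  also have "\<dots> \<le> c ^ Suc s" unfolding power_Suc by (rule mult_le_mono1[OF assms])
  finally show ?case .
qed simp

lemma exists_irreducible_of_degree:
  assumes "s \<ge> 1"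
  shows "\<exists>f :: 'a::prime_card mod_ring poly. irreducible f \<and> degree f = s"
proof (rule ccontr)
  \<comment> \<open>X^(p^s) - X is squarefree and its irreducible factors have degree at most s; if none has
     degree s, it divides the product of the X^(p^d) - X with d < s, which has smaller degree.\<close>
  assume none: "\<not> ?thesis"
  define P :: "nat \<Rightarrow> 'a mod_ring poly" where "P d = monom 1 1 ^ CARD('a) ^ d - monom 1 1" for d
  define Q where "Q = (\<Prod>d\<in>{1..<s}. P d)"
  have card: "CARD('a) \<ge> 2" using prime_card prime_ge_2_nat by blast
  have degP: "degree (P d) = CARD('a) ^ d" if "d \<ge> 1" for d
  proof -
    have "CARD('a) ^ 1 \<le> CARD('a) ^ d" using that card by (intro power_increasing) auto
    thus ?thesis unfolding P_def using card by (intro degree_X_power_minus_X) simp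
  qed
  have "P d \<noteq> 0" if "d \<ge> 1" for d
    using degP[OF that] card by (metis degree_0 power_not_zero not_numeral_le_zero)
  hence "Q \<noteq> 0" unfolding Q_def by simp
  have "P s dvd Q"
  proof (rule squarefree_dvd_if_prime_divisors_dvd[OF _ \<open>Q \<noteq> 0\<close>])
    have "pderiv (P s) = -1" unfolding P_def by (rule pderiv_X_power_card_minus_X[OF assms])
    thus "squarefree (P s)" by (intro squarefree_if_is_unit_pderiv) simp
    fix p assume "prime p" "p dvd P s"
    hence irr: "irreducible p" by (intro prime_elem_imp_irreducible prime_imp_prime_elem)
    have "p \<noteq> 0" "\<not> is_unit p" using \<open>prime p\<close> not_prime_0 not_prime_unit by blast+
    hence "degree p \<ge> 1" using is_unit_iff_degree by fastforce
    moreover have "degree p \<le> s"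
      using degree_divisor2[OF irr refl, of s] \<open>p dvd P s\<close> assms by (fastforce simp: P_def)
    moreover have "degree p \<noteq> s" using none irr by blast
    ultimately have "degree p \<in> {1..<s}" by simp
    moreover have "p dvd P (degree p)"
      unfolding P_def by (rule degree_divisor1[OF irr refl])
    ultimately show "p dvd Q" unfolding Q_def by (meson dvd_prodI finite_atLeastLessThan dvd_trans)
  qed
  hence "CARD('a) ^ s \<le> degree Q" using degP[OF assms] \<open>Q \<noteq> 0\<close> by (metis divides_degree)
  also have "degree Q \<le> (\<Sum>d\<in>{1..<s}. CARD('a) ^ d)"
    unfolding Q_def by (rule order.trans[OF degree_prod_sum_le]) (auto simp: degP)
  also have "\<dots> \<le> (\<Sum>d<s. CARD('a) ^ d)" by (rule sum_mono2) auto
  also have "\<dots> < CARD('a) ^ s" using card by (rule sum_powers_less_power)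
  finally show False by simp
qed

lemma exists_field_of_card_power:
  assumes "s \<ge> 1"
  shows "\<exists>R :: 'a::prime_card mod_ring poly ring.
           field R \<and> finite (carrier R) \<and> card (carrier R) = CARD('a) ^ s"
proof -
  obtain f :: "'a mod_ring poly" where f: "irreducible f" "degree f = s"
    using exists_irreducible_of_degree[OF assms] by blast
  interpret poly_mod_type_irr "int CARD('a)" f by unfold_locales (auto simp: f)
  have "card (carrier R) = CARD('a) ^ s" by (simp add: R_def f)
  thus ?thesis using field_R.field_axioms by auto
qed

text \<open>A three-element type, so that \<open>three mod_ring\<close> is the field with three elements.\<close>

typedef three = "{0..<3::nat}" by (rule exI[of _ 0]) simp

lemma card_three: "CARD(three) = 3"
  using type_definition.card[OF type_definition_three] by simp

instance three :: prime_card
  by standard (simp add: card_three)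


definition rank :: "'a list \<Rightarrow> 'a \<Rightarrow> nat" where
  "rank xs a = length (takeWhile (\<lambda>b. b \<noteq> a) xs)"

lemma rank_less_length: "a \<in> set xs \<Longrightarrow> rank xs a < length xs"
  unfolding rank_def by (induction xs) auto

lemma nth_rank: "a \<in> set xs \<Longrightarrow> xs ! rank xs a = a"
  using nth_length_takeWhile[of "\<lambda>b. b \<noteq> a" xs] rank_less_length[of a xs]
  unfolding rank_def by auto

lemma rank_nth: "distinct xs \<Longrightarrow> i < length xs \<Longrightarrow> rank xs (xs ! i) = i"
  using nth_rank[of "xs ! i" xs] rank_less_length[of "xs ! i" xs] nth_eq_iff_index_eq by force

lemma rank_eq_iff: "a \<in> set xs \<Longrightarrow> b \<in> set xs \<Longrightarrow> rank xs a = rank xs b \<longleftrightarrow> a = b"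
  by (metis nth_rank)

lemma rank_rev:
  assumes "distinct xs" "a \<in> set xs"
  shows "rank (rev xs) a = length xs - 1 - rank xs a"
proof -
  have i: "rank xs a < length xs" using rank_less_length[OF assms(2)] .
  hence "rev xs ! (length xs - 1 - rank xs a) = a" by (simp add: rev_nth nth_rank[OF assms(2)])
  moreover have "rank (rev xs) (rev xs ! (length xs - 1 - rank xs a)) = length xs - 1 - rank xs a"
    using assms(1) i by (intro rank_nth) auto
  ultimately show ?thesis by simp
qed

lemma rank_rev_less_iff:
  "distinct xs \<Longrightarrow> a \<in> set xs \<Longrightarrow> b \<in> set xs \<Longrightarrow>
   rank (rev xs) a < rank (rev xs) b \<longleftrightarrow> rank xs b < rank xs a"
  using rank_rev[of xs a] rank_rev[of xs b] rank_less_length[of a xs] rank_less_length[of b xs]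
  by auto

lemma sorted_wrt_rank: "distinct xs \<Longrightarrow> sorted_wrt (\<lambda>a b. rank xs a < rank xs b) xs"
  unfolding sorted_wrt_iff_nth_less by (auto simp: rank_nth)

lemma subseq_iff_sorted_wrt:
  fixes f :: "'a \<Rightarrow> 'b::order"
  assumes "sorted_wrt (\<lambda>a b. f a < f b) ys"
  shows "subseq xs ys \<longleftrightarrow> set xs \<subseteq> set ys \<and> sorted_wrt (\<lambda>a b. f a < f b) xs"
  using assms
proof (induction ys arbitrary: xs)
  case Nil thus ?case by (cases xs) auto
next
  case (Cons a ys)
  hence a_min: "\<forall>b\<in>set ys. f a < f b" and IH: "\<And>xs. subseq xs ys \<longleftrightarrow>
      set xs \<subseteq> set ys \<and> sorted_wrt (\<lambda>a b. f a < f b) xs" by auto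
  show ?case
  proof (cases xs)
    case (Cons x xs')
    show ?thesis
    proof (cases "x = a")
      case True thus ?thesis using Cons IH a_min by auto
    next
      case False
      have "a \<notin> set xs" if "set xs \<subseteq> insert a (set ys)" "sorted_wrt (\<lambda>a b. f a < f b) xs"
        using that a_min False Cons by (auto dest: order.asym)
      thus ?thesis using Cons IH False by auto
    qed
  qed simp
qed

lemma subseq3_iff_rank:
  "distinct xs \<Longrightarrow> subseq [a, b, c] xs \<longleftrightarrow>
     a \<in> set xs \<and> b \<in> set xs \<and> c \<in> set xs \<and> rank xs a < rank xs b \<and> rank xs b < rank xs c"
  using subseq_iff_sorted_wrt[OF sorted_wrt_rank, of xs "[a, b, c]"] by auto

lemma subseq_sort_key_iff:
  fixes f :: "'a \<Rightarrow> 'b::linorder"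
  assumes "inj_on f (set xs)" "distinct xs"
  shows "subseq ys (sort_key f xs) \<longleftrightarrow> set ys \<subseteq> set xs \<and> sorted_wrt (\<lambda>a b. f a < f b) ys"
proof -
  have "sorted_wrt (<) (map f (sort_key f xs))"
    using assms by (simp add: strict_sorted_iff distinct_map)
  hence "sorted_wrt (\<lambda>a b. f a < f b) (sort_key f xs)" by (simp add: sorted_wrt_map)
  thus ?thesis by (simp add: subseq_iff_sorted_wrt)
qed

lemma size_filter_mset_eq_sum_of_bool:
  "size (filter_mset P M) = (\<Sum>x\<in>#M. of_bool (P x))"
  by (induction M) auto

lemma sum_mset_sum:
  "finite A \<Longrightarrow> (\<Sum>x\<in>#(\<Sum>a\<in>A. M a). f x) = (\<Sum>a\<in>A. \<Sum>x\<in># M a. f x)"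
  by (induction A rule: finite_induct) auto


section \<open>Counting in a PSCA(q, 3)\<close>

lemma PSCA_member_perm: "is_PSCA n k lam X \<Longrightarrow> \<sigma> \<in># X \<Longrightarrow> distinct \<sigma> \<and> set \<sigma> = {1..n}"
  unfolding is_PSCA_def perms_def by auto

lemma PSCA3_triple_count:
  assumes "is_PSCA q 3 lam X" "a \<in> {1..q}" "b \<in> {1..q}" "c \<in> {1..q}" "distinct [a, b, c]"
  shows "(\<Sum>\<sigma>\<in>#X. of_bool (rank \<sigma> a < rank \<sigma> b \<and> rank \<sigma> b < rank \<sigma> c)) = lam"
proof -
  have "[a, b, c] \<in> kseqs q 3" using assms(2-5) by (auto simp: kseqs_def)
  hence "size (filter_mset (subseq [a, b, c]) X) = lam" using assms(1) unfolding is_PSCA_def by blast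
  moreover have "subseq [a, b, c] \<sigma> \<longleftrightarrow> rank \<sigma> a < rank \<sigma> b \<and> rank \<sigma> b < rank \<sigma> c" if "\<sigma> \<in># X" for \<sigma>
  proof -
    have "distinct \<sigma>" "set \<sigma> = {1..q}" using PSCA_member_perm[OF assms(1) that] by auto
    thus ?thesis using assms(2-4) by (simp add: subseq3_iff_rank)
  qed
  ultimately show ?thesis by (simp add: size_filter_mset_eq_sum_of_bool cong: image_mset_cong)
qed

lemma PSCA3_pair_count:
  assumes "is_PSCA q 3 lam X" "q \<ge> 3" "a \<in> {1..q}" "b \<in> {1..q}" "a \<noteq> b"
  shows "(\<Sum>\<sigma>\<in>#X. of_bool (rank \<sigma> a < rank \<sigma> b)) = 3 * lam"
proof -
  have "\<exists>c\<in>{1, 2, 3}. c \<noteq> a \<and> c \<noteq> b" by auto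
  then obtain c where "c \<in> {1, 2, 3}" "c \<noteq> a" "c \<noteq> b" by blast
  hence c: "c \<in> {1..q}" "c \<noteq> a" "c \<noteq> b" using assms(2) by auto
  \<comment> \<open>Split by the position of a third symbol c.\<close>
  have split: "of_bool (rank \<sigma> a < rank \<sigma> b) =
          of_bool (rank \<sigma> c < rank \<sigma> a \<and> rank \<sigma> a < rank \<sigma> b)
        + of_bool (rank \<sigma> a < rank \<sigma> c \<and> rank \<sigma> c < rank \<sigma> b)
        + (of_bool (rank \<sigma> a < rank \<sigma> b \<and> rank \<sigma> b < rank \<sigma> c) :: nat)"
    if "\<sigma> \<in># X" for \<sigma>
  proof -
    have "rank \<sigma> c \<noteq> rank \<sigma> a" "rank \<sigma> c \<noteq> rank \<sigma> b"
      using rank_eq_iff[of _ \<sigma>] PSCA_member_perm[OF assms(1) that] c assms(3,4) by auto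
    thus ?thesis by auto
  qed
  have "(\<Sum>\<sigma>\<in>#X. of_bool (rank \<sigma> a < rank \<sigma> b) :: nat) =
          (\<Sum>\<sigma>\<in>#X. of_bool (rank \<sigma> c < rank \<sigma> a \<and> rank \<sigma> a < rank \<sigma> b)
          + of_bool (rank \<sigma> a < rank \<sigma> c \<and> rank \<sigma> c < rank \<sigma> b)
          + of_bool (rank \<sigma> a < rank \<sigma> b \<and> rank \<sigma> b < rank \<sigma> c))"
    by (rule arg_cong[where f = sum_mset], rule image_mset_cong, rule split)
  also have "\<dots> = (\<Sum>\<sigma>\<in>#X. of_bool (rank \<sigma> c < rank \<sigma> a \<and> rank \<sigma> a < rank \<sigma> b))
        + (\<Sum>\<sigma>\<in>#X. of_bool (rank \<sigma> a < rank \<sigma> c \<and> rank \<sigma> c < rank \<sigma> b))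
        + (\<Sum>\<sigma>\<in>#X. of_bool (rank \<sigma> a < rank \<sigma> b \<and> rank \<sigma> b < rank \<sigma> c))"
    by (simp add: sum_mset.distrib)
  also have "\<dots> = 3 * lam" using PSCA3_triple_count[OF assms(1)] assms(3-5) c by simp
  finally show ?thesis .
qed


section \<open>The product construction\<close>

text \<open>
  In each class d, \<open>line d p\<close> labels the line through the point p and \<open>place d p\<close> the position
  of p on it; the model is [q]^2 with the q + 1 parallel classes of an affine plane of order q.
\<close>

definition parallel_classes ::
    "'p set \<Rightarrow> 'l set \<Rightarrow> 'd set \<Rightarrow> ('d \<Rightarrow> 'p \<Rightarrow> 'l) \<Rightarrow> ('d \<Rightarrow> 'p \<Rightarrow> 'l) \<Rightarrow> bool" where
  "parallel_classes P L D line place \<longleftrightarrow> finite D \<and>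
     (\<forall>d\<in>D. \<forall>p\<in>P. line d p \<in> L \<and> place d p \<in> L) \<and>
     (\<forall>d\<in>D. inj_on (\<lambda>p. (line d p, place d p)) P) \<and>
     (\<forall>p\<in>P. \<forall>p'\<in>P. p \<noteq> p' \<longrightarrow> card {d\<in>D. line d p = line d p'} = 1)"

locale PSCA3_product =
  fixes q n lam :: nat and X :: "nat list multiset"
    and D :: "'d set" and line place :: "'d \<Rightarrow> nat \<Rightarrow> nat"
  assumes PSCA: "is_PSCA q 3 lam X" and q_ge_3: "q \<ge> 3"
    and classes: "parallel_classes {1..n} {1..q} D line place"
begin

definition key :: "nat list \<Rightarrow> bool \<Rightarrow> 'd \<Rightarrow> nat \<Rightarrow> nat \<times> nat" where
  "key \<sigma> flip d p = (rank \<sigma> (line d p), rank (if flip then rev \<sigma> else \<sigma>) (place d p))"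

definition arrange :: "nat list \<Rightarrow> bool \<Rightarrow> 'd \<Rightarrow> nat list" where
  "arrange \<sigma> flip d = sort_key (key \<sigma> flip d) [1..<Suc n]"

definition product :: "nat list multiset" where
  "product = (\<Sum>d\<in>D. {#arrange \<sigma> False d. \<sigma> \<in># X#} + {#arrange \<sigma> True d. \<sigma> \<in># X#})"

lemma line_place_range: "d \<in> D \<Longrightarrow> p \<in> {1..n} \<Longrightarrow> line d p \<in> {1..q} \<and> place d p \<in> {1..q}"
  using classes unfolding parallel_classes_def by blast

lemma line_place_inj:
  "d \<in> D \<Longrightarrow> p \<in> {1..n} \<Longrightarrow> p' \<in> {1..n} \<Longrightarrow> line d p = line d p' \<Longrightarrow> place d p = place d p'
   \<Longrightarrow> p = p'"
  using classes unfolding parallel_classes_def inj_on_def by blast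

lemma rank_eq_iff_in_PSCA:
  "\<sigma> \<in># X \<Longrightarrow> u \<in> {1..q} \<Longrightarrow> v \<in> {1..q} \<Longrightarrow> rank \<sigma> u = rank \<sigma> v \<longleftrightarrow> u = v"
  using rank_eq_iff[of u \<sigma> v] PSCA_member_perm[OF PSCA, of \<sigma>] by simp

lemma arrange_in_perms: "arrange \<sigma> flip d \<in> perms n"
  unfolding arrange_def perms_def by auto

lemma inj_on_key:
  assumes "\<sigma> \<in># X" "d \<in> D"
  shows "inj_on (key \<sigma> flip d) {1..n}"
proof
  fix x y assume x: "x \<in> {1..n}" and y: "y \<in> {1..n}" and eq: "key \<sigma> flip d x = key \<sigma> flip d y"
  let ?\<tau> = "if flip then rev \<sigma> else \<sigma>"
  have "set ?\<tau> = {1..q}" using PSCA_member_perm[OF PSCA assms(1)] by simp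
  have ranks: "rank \<sigma> (line d x) = rank \<sigma> (line d y)" "rank ?\<tau> (place d x) = rank ?\<tau> (place d y)"
    using eq unfolding key_def by simp_all
  have "line d x = line d y"
    using ranks(1) rank_eq_iff_in_PSCA[OF assms(1)] line_place_range[OF assms(2)] x y by blast
  moreover have "place d x = place d y"
    using ranks(2) rank_eq_iff[of "place d x" ?\<tau> "place d y"] \<open>set ?\<tau> = {1..q}\<close>
      line_place_range[OF assms(2)] x y by blast
  ultimately show "x = y" using line_place_inj[OF assms(2) x y] by blast
qed

lemma subseq_arrange_iff:
  assumes "\<sigma> \<in># X" "d \<in> D" "x \<in> {1..n}" "y \<in> {1..n}" "z \<in> {1..n}"
  shows "subseq [x, y, z] (arrange \<sigma> flip d) \<longleftrightarrow>
           key \<sigma> flip d x < key \<sigma> flip d y \<and> key \<sigma> flip d y < key \<sigma> flip d z"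
proof -
  let ?f = "key \<sigma> flip d"
  have "set [1..<Suc n] = {1..n}" by auto
  hence "inj_on ?f (set [1..<Suc n])" using inj_on_key[OF assms(1,2)] by (simp only:)
  hence "subseq [x, y, z] (arrange \<sigma> flip d) \<longleftrightarrow>
           set [x, y, z] \<subseteq> set [1..<Suc n] \<and> sorted_wrt (\<lambda>a b. ?f a < ?f b) [x, y, z]"
    unfolding arrange_def by (rule subseq_sort_key_iff) simp
  also have "\<dots> \<longleftrightarrow> ?f x < ?f y \<and> ?f x < ?f z \<and> ?f y < ?f z"
    using assms(3-5) by (simp del: upt_Suc)
  finally show ?thesis by (auto dest: order.strict_trans)
qed

definition coverage :: "nat list \<Rightarrow> 'd \<Rightarrow> nat \<Rightarrow> nat \<Rightarrow> nat \<Rightarrow> nat" where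
  "coverage \<sigma> d x y z =
    (if line d x = line d y \<and> line d y = line d z then
        of_bool (rank \<sigma> (place d x) < rank \<sigma> (place d y) \<and> rank \<sigma> (place d y) < rank \<sigma> (place d z))
      + of_bool (rank \<sigma> (place d z) < rank \<sigma> (place d y) \<and> rank \<sigma> (place d y) < rank \<sigma> (place d x))
     else if line d x = line d y then of_bool (rank \<sigma> (line d y) < rank \<sigma> (line d z))
     else if line d y = line d z then of_bool (rank \<sigma> (line d x) < rank \<sigma> (line d y))
     else if line d x = line d z then 0
     else 2 * of_bool (rank \<sigma> (line d x) < rank \<sigma> (line d y) \<and> rank \<sigma> (line d y) < rank \<sigma> (line d z)))"

lemma subseq_both_arrangements:
  assumes \<sigma>: "\<sigma> \<in># X" and d: "d \<in> D" and pts: "x \<in> {1..n}" "y \<in> {1..n}" "z \<in> {1..n}"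
    and "distinct [x, y, z]"
  shows "of_bool (subseq [x, y, z] (arrange \<sigma> False d)) + of_bool (subseq [x, y, z] (arrange \<sigma> True d))
           = coverage \<sigma> d x y z"
proof -
  let ?r = "rank \<sigma>" and ?r' = "rank (rev \<sigma>)"
  have rank_eq: "?r (line d u) = ?r (line d v) \<longleftrightarrow> line d u = line d v"
    if "u \<in> {1..n}" "v \<in> {1..n}" for u v
    using rank_eq_iff_in_PSCA[OF \<sigma>] line_place_range[OF d] that by simp
  have rank_place_neq: "?r (place d u) \<noteq> ?r (place d v)"
    if "u \<in> {1..n}" "v \<in> {1..n}" "u \<noteq> v" "line d u = line d v" for u v
  proof -
    have "place d u \<noteq> place d v" using line_place_inj[OF d that(1,2)] that(3,4) by blast
    thus ?thesis using rank_eq_iff_in_PSCA[OF \<sigma>] line_place_range[OF d] that(1,2) by simp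
  qed
  have rev_less: "?r' (place d u) < ?r' (place d v) \<longleftrightarrow> ?r (place d v) < ?r (place d u)"
    if "u \<in> {1..n}" "v \<in> {1..n}" for u v
    using rank_rev_less_iff[of \<sigma>] PSCA_member_perm[OF PSCA \<sigma>] line_place_range[OF d] that by simp
  have sub: "subseq [x, y, z] (arrange \<sigma> flip d) \<longleftrightarrow>
          (?r (line d x) < ?r (line d y) \<or> line d x = line d y \<and>
             rank (if flip then rev \<sigma> else \<sigma>) (place d x) < rank (if flip then rev \<sigma> else \<sigma>) (place d y)) \<and>
          (?r (line d y) < ?r (line d z) \<or> line d y = line d z \<and>
             rank (if flip then rev \<sigma> else \<sigma>) (place d y) < rank (if flip then rev \<sigma> else \<sigma>) (place d z))" for flip
    using subseq_arrange_iff[OF \<sigma> d pts, of flip] pts by (auto simp: key_def rank_eq[symmetric])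
  consider "line d x = line d y" "line d y = line d z" | "line d x = line d y" "line d y \<noteq> line d z"
    | "line d x \<noteq> line d y" "line d y = line d z" | "line d x \<noteq> line d y" "line d y \<noteq> line d z" "line d x = line d z"
    | "line d x \<noteq> line d y" "line d y \<noteq> line d z" "line d x \<noteq> line d z"
    by blast
  then show ?thesis
  proof cases
    case 1
    thus ?thesis using sub[of False] sub[of True] pts by (auto simp: rev_less coverage_def)
  next
    case 2
    thus ?thesis using sub[of False] sub[of True] pts rank_place_neq[of x y] \<open>distinct [x, y, z]\<close>
      by (auto simp: rev_less coverage_def)
  next
    case 3
    thus ?thesis using sub[of False] sub[of True] pts rank_place_neq[of y z] \<open>distinct [x, y, z]\<close>
      by (auto simp: rev_less coverage_def)
  next
    case 4
    thus ?thesis using sub[of False] sub[of True] by (auto simp: coverage_def)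
  next
    case 5
    thus ?thesis using sub[of False] sub[of True] by (simp add: coverage_def)
  qed
qed

lemma sum_coverage:
  assumes d: "d \<in> D" and pts: "x \<in> {1..n}" "y \<in> {1..n}" "z \<in> {1..n}" and "distinct [x, y, z]"
  shows "(\<Sum>\<sigma>\<in>#X. coverage \<sigma> d x y z) + 2 * lam * of_bool (line d x = line d z)
         = 2 * lam + lam * of_bool (line d x = line d y) + lam * of_bool (line d y = line d z)"
proof -
  have in_q: "line d u \<in> {1..q}" "place d u \<in> {1..q}" if "u \<in> {1..n}" for u
    using line_place_range[OF d that] by auto
  have place_neq: "place d u \<noteq> place d v"
    if "u \<in> {x, y, z}" "v \<in> {x, y, z}" "u \<noteq> v" "line d u = line d v" for u v
    using line_place_inj[OF d, of u v] pts that by blast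
  note pair_count = PSCA3_pair_count[OF PSCA q_ge_3] and triple_count = PSCA3_triple_count[OF PSCA]
  consider "line d x = line d y" "line d y = line d z" | "line d x = line d y" "line d y \<noteq> line d z"
    | "line d x \<noteq> line d y" "line d y = line d z"
    | "line d x \<noteq> line d y" "line d y \<noteq> line d z" "line d x = line d z"
    | "line d x \<noteq> line d y" "line d y \<noteq> line d z" "line d x \<noteq> line d z"
    by blast
  thus ?thesis
  proof cases
    case 1
    have "place d x \<noteq> place d y" "place d y \<noteq> place d z" "place d x \<noteq> place d z"
      using place_neq[of x y] place_neq[of y z] place_neq[of x z] 1 \<open>distinct [x, y, z]\<close> by auto
    thus ?thesis
      using 1 triple_count[of "place d x" "place d y" "place d z"]
        triple_count[of "place d z" "place d y" "place d x"] in_q pts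
      by (simp add: coverage_def sum_mset.distrib image_mset.compositionality comp_def)
  next
    case 2
    thus ?thesis using pair_count[of "line d y" "line d z"] in_q pts by (simp add: coverage_def)
  next
    case 3
    thus ?thesis using pair_count[of "line d x" "line d y"] in_q pts by (simp add: coverage_def)
  next
    case 4
    thus ?thesis by (simp add: coverage_def)
  next
    case 5
    thus ?thesis using triple_count[of "line d x" "line d y" "line d z"] in_q pts
      by (simp add: coverage_def sum_mset_distrib_left[symmetric])
  qed
qed

lemma count_in_class:
  assumes d: "d \<in> D" and pts: "x \<in> {1..n}" "y \<in> {1..n}" "z \<in> {1..n}" and "distinct [x, y, z]"
  shows "(\<Sum>\<sigma>\<in>#X. of_bool (subseq [x, y, z] (arrange \<sigma> False d))
                  + of_bool (subseq [x, y, z] (arrange \<sigma> True d)))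
           + 2 * lam * of_bool (line d x = line d z)
         = 2 * lam + lam * of_bool (line d x = line d y) + lam * of_bool (line d y = line d z)"
proof -
  have "(\<Sum>\<sigma>\<in>#X. of_bool (subseq [x, y, z] (arrange \<sigma> False d))
                  + of_bool (subseq [x, y, z] (arrange \<sigma> True d)) :: nat)
        = (\<Sum>\<sigma>\<in>#X. coverage \<sigma> d x y z)"
    by (rule arg_cong[where f = sum_mset], rule image_mset_cong,
        rule subseq_both_arrangements[OF _ d pts \<open>distinct [x, y, z]\<close>])
  thus ?thesis using sum_coverage[OF d pts \<open>distinct [x, y, z]\<close>] by simp
qed

lemma product_is_PSCA: "is_PSCA n 3 (2 * card D * lam) product"
  unfolding is_PSCA_def
proof (intro conjI ballI)
  have "finite D" using classes unfolding parallel_classes_def by blast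
  {
    fix \<pi> assume "\<pi> \<in># product"
    thus "\<pi> \<in> perms n" using \<open>finite D\<close> by (auto simp: product_def set_mset_sum arrange_in_perms)
  next
    fix \<kappa> assume "\<kappa> \<in> kseqs n 3"
    then obtain x y z where \<kappa>: "\<kappa> = [x, y, z]" and "distinct [x, y, z]"
      and pts: "x \<in> {1..n}" "y \<in> {1..n}" "z \<in> {1..n}"
      by (auto simp: kseqs_def numeral_3_eq_3 length_Suc_conv)
    have unique_class: "(\<Sum>d\<in>D. of_bool (line d u = line d v)) = (1::nat)"
      if "u \<in> {1..n}" "v \<in> {1..n}" "u \<noteq> v" for u v
      using classes that \<open>finite D\<close> unfolding parallel_classes_def by (simp add: Int_def)
    let ?C = "\<lambda>d. \<Sum>\<sigma>\<in>#X. of_bool (subseq [x, y, z] (arrange \<sigma> False d))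
                      + of_bool (subseq [x, y, z] (arrange \<sigma> True d))"
    have "size (filter_mset (subseq \<kappa>) product) = (\<Sum>d\<in>D. ?C d)"
      unfolding \<kappa> product_def size_filter_mset_eq_sum_of_bool sum_mset_sum[OF \<open>finite D\<close>]
      by (simp add: sum_mset.distrib image_mset.compositionality comp_def)
    moreover have "(\<Sum>d\<in>D. ?C d) + 2 * lam = 2 * card D * lam + 2 * lam"
    proof -
      have "(\<Sum>d\<in>D. ?C d + 2 * lam * of_bool (line d x = line d z)) =
            (\<Sum>d\<in>D. 2 * lam + lam * of_bool (line d x = line d y) + lam * of_bool (line d y = line d z))"
        using count_in_class[OF _ pts \<open>distinct [x, y, z]\<close>] by (rule sum.cong[OF refl])
      thus ?thesis using unique_class pts \<open>distinct [x, y, z]\<close>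
        by (simp add: sum.distrib sum_distrib_left[symmetric] algebra_simps)
    qed
    ultimately show "size (filter_mset (subseq \<kappa>) product) = 2 * card D * lam" by simp
  }
qed

end



section \<open>Affine planes over finite fields\<close>

text \<open>
  Class \<open>None\<close> consists of the vertical lines, labelled by x; class \<open>Some m\<close> of the lines of
  slope m, labelled by their intercept y - m x. The place of a point is its other coordinate.
\<close>

definition affine_line :: "('a, 'b) ring_scheme \<Rightarrow> 'a option \<Rightarrow> 'a \<times> 'a \<Rightarrow> 'a" where
  "affine_line R d p = (case d of None \<Rightarrow> fst p | Some m \<Rightarrow> snd p \<ominus>\<^bsub>R\<^esub> m \<otimes>\<^bsub>R\<^esub> fst p)"

definition affine_place :: "'a option \<Rightarrow> 'a \<times> 'a \<Rightarrow> 'a" where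
  "affine_place d p = (case d of None \<Rightarrow> snd p | Some _ \<Rightarrow> fst p)"

lemma (in ring) minus_right_cancel:
  "y \<in> carrier R \<Longrightarrow> y' \<in> carrier R \<Longrightarrow> t \<in> carrier R \<Longrightarrow> y \<ominus> t = y' \<ominus> t \<longleftrightarrow> y = y'"
  by (simp add: a_minus_def)

lemma (in field) unique_slope:
  assumes c: "x \<in> carrier R" "y \<in> carrier R" "x' \<in> carrier R" "y' \<in> carrier R" and "x \<noteq> x'"
  shows "\<exists>!m. m \<in> carrier R \<and> y \<ominus> m \<otimes> x = y' \<ominus> m \<otimes> x'"
proof -
  define a where "a = x \<ominus> x'"
  define b where "b = y \<ominus> y'"
  have b: "b \<in> carrier R" using c by (simp add: b_def)
  have a: "a \<in> carrier R" "a \<in> Units R"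
    using c \<open>x \<noteq> x'\<close> by (auto simp: a_def field_Units)
  have "y \<ominus> m \<otimes> x = y' \<ominus> m \<otimes> x' \<longleftrightarrow> m = b \<otimes> inv a" if m: "m \<in> carrier R" for m
  proof -
    have "(y \<ominus> m \<otimes> x) \<ominus> (y' \<ominus> m \<otimes> x') = b \<ominus> m \<otimes> a"
      unfolding a_def b_def using c m by algebra
    hence "y \<ominus> m \<otimes> x = y' \<ominus> m \<otimes> x' \<longleftrightarrow> m \<otimes> a = b"
      using c m a b by (metis r_right_minus_eq minus_closed m_closed)
    also have "\<dots> \<longleftrightarrow> m = b \<otimes> inv a"
    proof
      assume "m \<otimes> a = b"
      hence "m \<otimes> a \<otimes> inv a = b \<otimes> inv a" by simp
      thus "m = b \<otimes> inv a" using m a by (simp add: m_assoc)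
    qed (use a b in \<open>simp add: m_assoc\<close>)
    finally show ?thesis .
  qed
  moreover have "b \<otimes> inv a \<in> carrier R" using a b by simp
  ultimately show ?thesis by blast
qed

lemma (in field) parallel_classes_affine_plane:
  assumes "finite (carrier R)"
  shows "parallel_classes (carrier R \<times> carrier R) (carrier R) (insert None (Some ` carrier R))
           (affine_line R) affine_place"
proof -
  let ?C = "carrier R" and ?D = "insert None (Some ` carrier R)"
  have range: "\<forall>d\<in>?D. \<forall>p\<in>?C \<times> ?C. affine_line R d p \<in> ?C \<and> affine_place d p \<in> ?C"
    by (auto simp: affine_line_def affine_place_def)
  have inj: "inj_on (\<lambda>p. (affine_line R d p, affine_place d p)) (?C \<times> ?C)" if d: "d \<in> ?D" for d
  proof (rule inj_onI)
    fix p p' assume "p \<in> ?C \<times> ?C" "p' \<in> ?C \<times> ?C"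
      and eq: "(affine_line R d p, affine_place d p) = (affine_line R d p', affine_place d p')"
    then obtain x y x' y' where p: "p = (x, y)" "p' = (x', y')"
      and c: "x \<in> ?C" "y \<in> ?C" "x' \<in> ?C" "y' \<in> ?C" by auto
    show "p = p'"
    proof (cases d)
      case None thus ?thesis using eq by (simp add: affine_line_def affine_place_def p)
    next
      case (Some m)
      hence "m \<in> ?C" "x = x'" "y \<ominus> m \<otimes> x = y' \<ominus> m \<otimes> x"
        using d eq by (auto simp: affine_line_def affine_place_def p)
      thus ?thesis using c by (simp add: minus_right_cancel p)
    qed
  qed
  have unique: "card {d\<in>?D. affine_line R d p = affine_line R d p'} = 1"
    if pts: "p \<in> ?C \<times> ?C" "p' \<in> ?C \<times> ?C" and "p \<noteq> p'" for p p'
  proof -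
    obtain x y x' y' where p: "p = (x, y)" "p' = (x', y')"
      and c: "x \<in> ?C" "y \<in> ?C" "x' \<in> ?C" "y' \<in> ?C" using pts by auto
    show ?thesis
    proof (cases "x = x'")
      case True
      hence "y \<noteq> y'" using \<open>p \<noteq> p'\<close> p by simp
      have "d \<in> {d\<in>?D. affine_line R d p = affine_line R d p'} \<longleftrightarrow> d = None" for d
      proof (cases d)
        case (Some m)
        thus ?thesis using True c \<open>y \<noteq> y'\<close> by (auto simp: p affine_line_def minus_right_cancel)
      qed (simp add: p affine_line_def True)
      hence "{d\<in>?D. affine_line R d p = affine_line R d p'} = {None}" by blast
      thus ?thesis by simp
    next
      case False
      then obtain m where slope: "m \<in> ?C" "y \<ominus> m \<otimes> x = y' \<ominus> m \<otimes> x'"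
        and unique: "\<And>m'. m' \<in> ?C \<Longrightarrow> y \<ominus> m' \<otimes> x = y' \<ominus> m' \<otimes> x' \<Longrightarrow> m' = m"
        using unique_slope[OF c False] by blast
      have "d \<in> {d\<in>?D. affine_line R d p = affine_line R d p'} \<longleftrightarrow> d = Some m" for d
      proof (cases d)
        case (Some m')
        thus ?thesis using slope unique[of m'] by (auto simp: p affine_line_def)
      qed (simp add: p affine_line_def False)
      hence "{d\<in>?D. affine_line R d p = affine_line R d p'} = {Some m}" by blast
      thus ?thesis by simp
    qed
  qed
  show ?thesis unfolding parallel_classes_def using assms range inj unique by blast
qed

lemma parallel_classes_transfer:
  assumes pc: "parallel_classes P L D line place"
    and \<psi>: "inj_on \<psi> P'" "\<psi> ` P' \<subseteq> P" and \<phi>: "inj_on \<phi> L"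
  shows "parallel_classes P' (\<phi> ` L) D (\<lambda>d p. \<phi> (line d (\<psi> p))) (\<lambda>d p. \<phi> (place d (\<psi> p)))"
proof -
  have range: "line d (\<psi> p) \<in> L" "place d (\<psi> p) \<in> L" if "d \<in> D" "p \<in> P'" for d p
    using pc \<psi>(2) that unfolding parallel_classes_def by blast+
  have \<phi>_eq: "\<phi> (line d (\<psi> p)) = \<phi> (line d (\<psi> p')) \<longleftrightarrow> line d (\<psi> p) = line d (\<psi> p')"
    "\<phi> (place d (\<psi> p)) = \<phi> (place d (\<psi> p')) \<longleftrightarrow> place d (\<psi> p) = place d (\<psi> p')"
    if "d \<in> D" "p \<in> P'" "p' \<in> P'" for d p p'
    using inj_on_eq_iff[OF \<phi>] range that by blast+
  have "inj_on (\<lambda>p. (\<phi> (line d (\<psi> p)), \<phi> (place d (\<psi> p)))) P'" if "d \<in> D" for d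
  proof (rule inj_onI)
    fix p p' assume "p \<in> P'" "p' \<in> P'"
      and "(\<phi> (line d (\<psi> p)), \<phi> (place d (\<psi> p))) = (\<phi> (line d (\<psi> p')), \<phi> (place d (\<psi> p')))"
    hence "(line d (\<psi> p), place d (\<psi> p)) = (line d (\<psi> p'), place d (\<psi> p'))"
      using \<phi>_eq[OF that] by simp
    hence "\<psi> p = \<psi> p'"
      using pc that \<psi>(2) \<open>p \<in> P'\<close> \<open>p' \<in> P'\<close> unfolding parallel_classes_def inj_on_def by blast
    thus "p = p'" using \<psi>(1) \<open>p \<in> P'\<close> \<open>p' \<in> P'\<close> by (simp add: inj_on_eq_iff)
  qed
  moreover have "card {d\<in>D. \<phi> (line d (\<psi> p)) = \<phi> (line d (\<psi> p'))} = 1"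
    if "p \<in> P'" "p' \<in> P'" "p \<noteq> p'" for p p'
  proof -
    have "{d\<in>D. \<phi> (line d (\<psi> p)) = \<phi> (line d (\<psi> p'))} = {d\<in>D. line d (\<psi> p) = line d (\<psi> p')}"
      using \<phi>_eq that by blast
    moreover have "\<psi> p \<noteq> \<psi> p'" "\<psi> p \<in> P" "\<psi> p' \<in> P" using \<psi> that by (auto simp: inj_on_eq_iff)
    ultimately show ?thesis using pc unfolding parallel_classes_def by simp
  qed
  ultimately show ?thesis using pc range unfolding parallel_classes_def by auto
qed

lemma exists_parallel_classes:
  fixes R :: "('a, 'b) ring_scheme"
  assumes "field R" "finite (carrier R)" "card (carrier R) = q" "n \<le> q ^ 2"
  shows "\<exists>(D :: 'a option set) line place. parallel_classes {1..n} {1..q} D line place \<and> card D = q + 1"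
proof -
  obtain \<phi> where \<phi>: "bij_betw \<phi> (carrier R) {1..q}"
    using finite_same_card_bij[OF assms(2), of "{1..q}"] assms(3) by auto
  have "card {1..n} \<le> card (carrier R \<times> carrier R)"
    using assms(2-4) by (simp add: card_cartesian_product power2_eq_square)
  then obtain \<psi> where \<psi>: "\<psi> ` {1..n} \<subseteq> carrier R \<times> carrier R" "inj_on \<psi> {1..n}"
    using card_le_inj[of "{1..n}" "carrier R \<times> carrier R"] assms(2) by auto
  have "inj_on \<phi> (carrier R)" and \<phi>_image: "\<phi> ` carrier R = {1..q}"
    using \<phi> by (auto simp: bij_betw_def)
  hence "parallel_classes {1..n} (\<phi> ` carrier R) (insert None (Some ` carrier R))
          (\<lambda>d p. \<phi> (affine_line R d (\<psi> p))) (\<lambda>d p. \<phi> (affine_place d (\<psi> p)))"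
    by (intro parallel_classes_transfer[OF field.parallel_classes_affine_plane[OF assms(1,2)] \<psi>(2,1)])
  hence "parallel_classes {1..n} {1..q} (insert None (Some ` carrier R))
          (\<lambda>d p. \<phi> (affine_line R d (\<psi> p))) (\<lambda>d p. \<phi> (affine_place d (\<psi> p)))"
    by (simp only: \<phi>_image)
  moreover have "card (insert None (Some ` carrier R)) = q + 1"
    using assms(2,3) by (simp add: card_image)
  ultimately show ?thesis by metis
qed


lemma perms_is_PSCA: "is_PSCA k k 1 (mset_set (perms k))"
proof -
  have length_perm: "length \<pi> = k" if "\<pi> \<in> perms k" for \<pi>
    using that distinct_card[of \<pi>] unfolding perms_def by force
  have "perms k \<subseteq> {xs. set xs \<subseteq> {1..k} \<and> length xs = k}"
    using length_perm unfolding perms_def by blast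
  hence fin: "finite (perms k)" by (rule finite_subset) (rule finite_lists_length_eq, simp)
  have "{\<pi> \<in> perms k. subseq \<kappa> \<pi>} = {\<kappa>}" if "\<kappa> \<in> kseqs k k" for \<kappa>
  proof -
    have \<kappa>: "distinct \<kappa>" "length \<kappa> = k" "set \<kappa> \<subseteq> {1..k}" using that by (auto simp: kseqs_def)
    hence "card (set \<kappa>) = card {1..k}" by (simp add: distinct_card)
    hence "set \<kappa> = {1..k}" using \<kappa>(3) by (intro card_subset_eq) simp_all
    hence "\<kappa> \<in> perms k" using \<kappa>(1) by (simp add: perms_def)
    moreover have "\<pi> = \<kappa>" if "\<pi> \<in> perms k" "subseq \<kappa> \<pi>" for \<pi>
      using subseq_same_length[OF that(2)] length_perm[OF that(1)] \<kappa>(2) by simp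
    ultimately show ?thesis by blast
  qed
  thus ?thesis using fin unfolding is_PSCA_def by simp
qed

text \<open>The defining equation of \<open>lam_seq\<close> is unconditional, so it would make simp loop.\<close>

declare lam_seq.simps [simp del]

lemma lam_seq_pos: "lam_seq r > 0"
proof (induction r rule: lam_seq.induct)
  case (1 r)
  show ?case using 1 by (subst lam_seq.simps) simp
qed

lemma exists_PSCA3_power_of_three: "r \<ge> 1 \<Longrightarrow> \<exists>X. is_PSCA (3 ^ r) 3 (lam_seq r) X"
proof (induction r rule: less_induct)
  case (less r)
  show ?case
  proof (cases "r = 1")
    case True
    have "lam_seq 1 = 1" by (subst lam_seq.simps) simp
    thus ?thesis using True perms_is_PSCA[of 3] by auto
  next
    case False
    define s where "s = (r + 1) div 2"
    have s: "1 \<le> s" "s < r" "r \<le> 2 * s" using False less.prems by (auto simp: s_def)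
    have lam_r: "lam_seq r = 2 * (3 ^ s + 1) * lam_seq s"
      using s by (subst lam_seq.simps) (simp add: s_def)
    obtain X where X: "is_PSCA (3 ^ s) 3 (lam_seq s) X" using less.IH[OF s(2,1)] by blast
    obtain R :: "three mod_ring poly ring" where R: "field R" "finite (carrier R)" "card (carrier R) = 3 ^ s"
      using exists_field_of_card_power[OF s(1), where 'a = three] by (auto simp: card_three)
    have "(3::nat) ^ r \<le> 3 ^ (s * 2)" using s(3) by (intro power_increasing) simp_all
    hence "(3::nat) ^ r \<le> (3 ^ s) ^ 2" by (simp only: power_mult)
    then obtain D :: "three mod_ring poly option set" and line place :: "_ \<Rightarrow> nat \<Rightarrow> nat"
      where D: "parallel_classes {1..3 ^ r} {1..3 ^ s} D line place" "card D = 3 ^ s + 1"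
      using exists_parallel_classes[OF R] by blast
    have "(3::nat) \<le> 3 ^ s" using power_increasing[OF s(1), of "3::nat"] by simp
    then interpret PSCA3_product "3 ^ s" "3 ^ r" "lam_seq s" X D line place
      using X D(1) by unfold_locales
    show ?thesis using product_is_PSCA unfolding lam_r D(2)[symmetric] by blast
  qed
qed

theorem lemma3p2:
  fixes r :: nat
  assumes "r \<ge> 1"
  shows "g (3 ^ r) 3 \<le> lam_seq r"
proof -
  obtain X where "is_PSCA (3 ^ r) 3 (lam_seq r) X" using exists_PSCA3_power_of_three[OF assms] by blast
  thus ?thesis unfolding g_def using lam_seq_pos by (intro Least_le) blast
qed

end
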